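(* Let $k\ge2$, $d=2^k+1$, and let $f(x)=x^d+g(x)$ with $g(x)=\sum_{j=0}^{2^{k-1}+1}a_jx^j\in\mathbb{F}_q[x]$. Suppose there is an index $j$ with $a_j\neq0$ such that $\phi_j(x,y,z)$ is nonzero and relatively prime to $\phi_d(x,y,z)$ in $\overline{\mathbb{F}_q}[x,y,z]$. Then $\phi(x,y,z)$ is absolutely irreducible.
   Context: Let $q=2^m$. For an integer $j\ge0$ let $\phi_j(x,y,z)=\dfrac{x^j+y^j+z^j+(x+y+z)^j}{(x+y)(x+z)(y+z)}$, a homogeneous polynomial of degree $j-3$ over $\mathbb{F}_2$. For $f\in\mathbb{F}_q[x]$ let $\phi(x,y,z)=\dfrac{f(x)+f(y)+f(z)+f(x+y+z)}{(x+y)(x+z)(y+z)}\in\mathbb{F}_q[x,y,z]$. Absolutely irreducible means irreducible (and nonconstant) over $\overline{\mathbb{F}_q}$. *)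

theory Defs
  imports "HOL-Computational_Algebra.Computational_Algebra" "HOL-Algebra.Algebraic_Closure_Type"
begin

text \<open>Trivariate polynomials K[x,y,z] are represented as nested univariate
  polynomials K[x][y][z], i.e. the type K poly poly poly; x is the innermost
  variable and z the outermost one.\<close>

definition tvC :: "'b::comm_ring_1 \<Rightarrow> 'b poly poly poly" where
  "tvC c = [:[:[:c:]:]:]"

definition tvX :: "'b::comm_ring_1 poly poly poly" where
  "tvX = [:[:[:0, 1:]:]:]"

definition tvY :: "'b::comm_ring_1 poly poly poly" where
  "tvY = [:[:0, 1:]:]"

definition tvZ :: "'b::comm_ring_1 poly poly poly" where
  "tvZ = [:0, 1:]"

definition eval3 :: "'b::comm_ring_1 poly \<Rightarrow> 'b poly poly poly \<Rightarrow> 'b poly poly poly" where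
  "eval3 p t = poly (map_poly tvC p) t"

definition denom3 :: "'b::comm_ring_1 poly poly poly" where
  "denom3 = (tvX + tvY) * (tvX + tvZ) * (tvY + tvZ)"

definition phi_pow :: "nat \<Rightarrow> 'b::field poly poly poly" where
  "phi_pow j = (tvX ^ j + tvY ^ j + tvZ ^ j + (tvX + tvY + tvZ) ^ j) div denom3"

definition phi_of :: "'b::field poly \<Rightarrow> 'b poly poly poly" where
  "phi_of f = (eval3 f tvX + eval3 f tvY + eval3 f tvZ + eval3 f (tvX + tvY + tvZ)) div denom3"

end

theory Submission
  imports Defs "HOL-Number_Theory.Residues"
begin

(* All work is done over a field K of characteristic 2
   (later the algebraic closure) on K[x,y,z] = K[x][y][z].

   1. A ring homomorphism on K[x,y,z] is determined by its values on constants and on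
      x, y, z.  This yields the variable swaps and the homogenization
      H(P)(t) = P(tx,ty,tz) in K[x,y,z][t], whose t^i coefficient is the homogeneous
      component of degree i of P.
   2. In characteristic 2 the numerator N_j = x^j+y^j+z^j+(x+y+z)^j is divisible by
      D = (x+y)(x+z)(y+z); hence N_j = D phi_j, phi_j is homogeneous of degree j-3,
      phi_j = 0 for j < 3, and H(phi_f) = sum_j f_j phi_j t^(j-3).
   3. phi_d is squarefree: d/dz N_d = (x+y)^(2^k), so a square factor of phi_d divides
      x+y and, after swapping y and z, also x+z.
   4. Gap argument: if phi_f = P Q, the leading components of H(P), H(Q) are coprime
      factors of phi_d, and the vanishing of the components of phi_f in the degrees just
      below the top forces P to be homogeneous.  Then P divides a component f_j phi_j with
      phi_j coprime to phi_d, so P is a unit. *)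

definition is_ring_hom :: "('x::comm_ring_1 \<Rightarrow> 'y::comm_ring_1) \<Rightarrow> bool" where
  "is_ring_hom f \<longleftrightarrow>
     f 0 = 0 \<and> f 1 = 1 \<and> (\<forall>a b. f (a + b) = f a + f b) \<and> (\<forall>a b. f (a * b) = f a * f b)"

lemma is_ring_homD:
  assumes "is_ring_hom f"
  shows "f 0 = 0" "f 1 = 1" "f (a + b) = f a + f b" "f (a * b) = f a * f b"
  using assms unfolding is_ring_hom_def by auto

lemma is_ring_hom_power: "is_ring_hom f \<Longrightarrow> f (a ^ n) = f a ^ n"
  by (induction n) (auto simp: is_ring_homD)

lemma is_ring_hom_sum: "is_ring_hom f \<Longrightarrow> f (sum g A) = (\<Sum>x\<in>A. f (g x))"
  by (induction A rule: infinite_finite_induct) (auto simp: is_ring_homD)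

lemma is_ring_hom_dvd: "is_ring_hom f \<Longrightarrow> a dvd b \<Longrightarrow> f a dvd f b"
  by (metis dvd_def is_ring_homD(4))

lemma is_ring_hom_unit: "is_ring_hom f \<Longrightarrow> is_unit a \<Longrightarrow> is_unit (f a)"
  by (metis is_ring_homD(2) is_ring_hom_dvd)

lemma is_ring_hom_id: "is_ring_hom (\<lambda>x. x)"
  by (simp add: is_ring_hom_def)

lemma is_ring_hom_comp: "is_ring_hom f \<Longrightarrow> is_ring_hom g \<Longrightarrow> is_ring_hom (f \<circ> g)"
  by (simp add: is_ring_hom_def)

lemma is_ring_hom_poly: "is_ring_hom (\<lambda>p. poly p a)"
  by (simp add: is_ring_hom_def)

lemma is_ring_hom_const: "is_ring_hom (\<lambda>a. [:a:])"
  by (simp add: is_ring_hom_def one_pCons)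

lemma is_ring_hom_map_poly:
  assumes f: "is_ring_hom f"
  shows "is_ring_hom (map_poly f)"
proof -
  have add: "map_poly f (p + q) = map_poly f p + map_poly f q" for p q
    by (rule poly_eqI) (simp add: coeff_map_poly is_ring_homD[OF f])
  have mult: "map_poly f (p * q) = map_poly f p * map_poly f q" for p q
    by (rule poly_eqI)
      (simp add: coeff_map_poly is_ring_homD[OF f] coeff_mult is_ring_hom_sum[OF f])
  show ?thesis unfolding is_ring_hom_def using add mult is_ring_homD[OF f]
    by (simp add: map_poly_1)
qed

lemma involution_coprime:
  fixes f :: "'c::{semiring_gcd,comm_ring_1} \<Rightarrow> 'c"
  assumes "is_ring_hom f" "\<And>x. f (f x) = x" "coprime a b"
  shows "coprime (f a) (f b)"
proof (rule coprimeI)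
  fix c assume "c dvd f a" "c dvd f b"
  then have "f c dvd a" "f c dvd b" using is_ring_hom_dvd[OF assms(1)] assms(2) by metis+
  then have "is_unit (f c)" using assms(3) coprime_common_divisor by blast
  then show "is_unit c" using is_ring_hom_unit[OF assms(1)] assms(2) by metis
qed

lemma ring_hom_poly_unique:
  fixes p :: "'a::comm_ring_1 poly"
  assumes "is_ring_hom \<phi>" "is_ring_hom \<psi>"
    and "\<And>c. \<phi> [:c:] = \<psi> [:c:]" "\<phi> [:0,1:] = \<psi> [:0,1:]"
  shows "\<phi> p = \<psi> p"
proof (induction p)
  case (pCons a p)
  have split: "pCons a p = [:a:] + [:0,1:] * p" by simp
  have "\<phi> (pCons a p) = \<phi> [:a:] + \<phi> [:0,1:] * \<phi> p"
    using is_ring_homD[OF assms(1)] split by metis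
  moreover have "\<psi> (pCons a p) = \<psi> [:a:] + \<psi> [:0,1:] * \<psi> p"
    using is_ring_homD[OF assms(2)] split by metis
  ultimately show ?case using assms(3,4) pCons.IH by simp
qed (use assms in \<open>simp add: is_ring_homD\<close>)

lemma ring_hom_trivariate_unique:
  fixes P :: "'b::comm_ring_1 poly poly poly"
  assumes f: "is_ring_hom \<phi>" and g: "is_ring_hom \<psi>" and c: "\<And>c. \<phi> (tvC c) = \<psi> (tvC c)"
    and x: "\<phi> tvX = \<psi> tvX" and y: "\<phi> tvY = \<psi> tvY" and z: "\<phi> tvZ = \<psi> tvZ"
  shows "\<phi> P = \<psi> P"
proof -
  have const2: "is_ring_hom (\<lambda>r. [:[:r:]:])"
    using is_ring_hom_comp[OF is_ring_hom_const is_ring_hom_const] by (simp add: o_def)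
  have on_R_x: "\<phi> [:[:r:]:] = \<psi> [:[:r:]:]" for r
    using ring_hom_poly_unique[of "\<phi> \<circ> (\<lambda>r. [:[:r:]:])" "\<psi> \<circ> (\<lambda>r. [:[:r:]:])" r] c x
      is_ring_hom_comp[OF f const2] is_ring_hom_comp[OF g const2]
    by (simp add: tvC_def tvX_def o_def)
  have on_R_x_y: "\<phi> [:q:] = \<psi> [:q:]" for q
    using ring_hom_poly_unique[of "\<phi> \<circ> (\<lambda>r. [:r:])" "\<psi> \<circ> (\<lambda>r. [:r:])" q] on_R_x y
      is_ring_hom_comp[OF f is_ring_hom_const] is_ring_hom_comp[OF g is_ring_hom_const]
    by (simp add: tvY_def o_def)
  show ?thesis
    using ring_hom_poly_unique[OF f g] on_R_x_y z by (simp add: tvZ_def)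
qed

text \<open>The substitution x := a, y := b, z := c after mapping the constants along \<iota>.\<close>
definition subst3 ::
  "('b::comm_ring_1 \<Rightarrow> 'c::comm_ring_1) \<Rightarrow> 'c \<Rightarrow> 'c \<Rightarrow> 'c \<Rightarrow> 'b poly poly poly \<Rightarrow> 'c" where
  "subst3 \<iota> a b c = (\<lambda>P. poly P c) \<circ>
     map_poly ((\<lambda>Q. poly Q b) \<circ> map_poly ((\<lambda>r. poly r a) \<circ> map_poly \<iota>))"

lemma is_ring_hom_subst3: "is_ring_hom \<iota> \<Longrightarrow> is_ring_hom (subst3 \<iota> a b c)"
  unfolding subst3_def
  by (intro is_ring_hom_comp is_ring_hom_map_poly is_ring_hom_poly) auto

lemma subst3_simps:
  assumes "is_ring_hom \<iota>"
  shows "subst3 \<iota> a b c (tvC x) = \<iota> x" "subst3 \<iota> a b c tvX = a"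
    "subst3 \<iota> a b c tvY = b" "subst3 \<iota> a b c tvZ = c"
  using is_ring_homD[OF assms] is_ring_homD[OF is_ring_hom_subst3[OF assms]]
  by (simp_all add: subst3_def tvC_def tvX_def tvY_def tvZ_def map_poly_pCons)

lemma is_ring_hom_tvC: "is_ring_hom (tvC :: 'b::comm_ring_1 \<Rightarrow> _)"
  unfolding is_ring_hom_def tvC_def by (simp add: one_pCons)

definition swap_xy :: "'b::comm_ring_1 poly poly poly \<Rightarrow> 'b poly poly poly" where
  "swap_xy = subst3 tvC tvY tvX tvZ"
definition swap_xz :: "'b::comm_ring_1 poly poly poly \<Rightarrow> 'b poly poly poly" where
  "swap_xz = subst3 tvC tvZ tvY tvX"
definition swap_yz :: "'b::comm_ring_1 poly poly poly \<Rightarrow> 'b poly poly poly" where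
  "swap_yz = subst3 tvC tvX tvZ tvY"

lemma is_ring_hom_swap: "is_ring_hom swap_xy" "is_ring_hom swap_xz" "is_ring_hom swap_yz"
  unfolding swap_xy_def swap_xz_def swap_yz_def by (simp_all add: is_ring_hom_subst3 is_ring_hom_tvC)

lemma swap_simps:
  "swap_xy tvX = tvY" "swap_xy tvY = tvX" "swap_xy tvZ = tvZ" "swap_xy (tvC c) = tvC c"
  "swap_xz tvX = tvZ" "swap_xz tvY = tvY" "swap_xz tvZ = tvX" "swap_xz (tvC c) = tvC c"
  "swap_yz tvX = tvX" "swap_yz tvY = tvZ" "swap_yz tvZ = tvY" "swap_yz (tvC c) = tvC c"
  by (simp_all add: swap_xy_def swap_xz_def swap_yz_def subst3_simps[OF is_ring_hom_tvC])

lemma swap_yz_involution: "swap_yz (swap_yz P) = P"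
  using ring_hom_trivariate_unique[of "swap_yz \<circ> swap_yz" "\<lambda>x. x" P]
    is_ring_hom_comp[OF is_ring_hom_swap(3) is_ring_hom_swap(3)] is_ring_hom_id
  by (simp add: swap_simps)

lemmas swap_hom_simps = is_ring_homD[OF is_ring_hom_swap(1)] is_ring_homD[OF is_ring_hom_swap(2)]
  is_ring_homD[OF is_ring_hom_swap(3)] is_ring_hom_power[OF is_ring_hom_swap(1)]
  is_ring_hom_power[OF is_ring_hom_swap(2)] is_ring_hom_power[OF is_ring_hom_swap(3)] swap_simps

lemma char_two_poly: "(2::'c::comm_ring_1) = 0 \<Longrightarrow> (2::'c poly) = 0"
  by (metis numeral_poly pCons_0_0)

lemma char_two_add_self: "(2::'c::comm_ring_1) = 0 \<Longrightarrow> x + x = (0::'c)"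
  by (metis mult_2 mult_zero_left)

lemma char_two_uminus: "(2::'c::comm_ring_1) = 0 \<Longrightarrow> - x = (x::'c)"
  by (metis char_two_add_self add.inverse_unique)

lemma char_two_power_add:
  "(2::'c::comm_ring_1) = 0 \<Longrightarrow> (a + b) ^ (2 ^ k) = a ^ (2 ^ k) + (b::'c) ^ (2 ^ k)"
proof (induction k)
  case (Suc k)
  have "(a + b) ^ (2 ^ Suc k) = ((a + b) ^ (2 ^ k))\<^sup>2"
    by (simp add: power_mult[symmetric] mult.commute)
  also have "\<dots> = (a ^ (2 ^ k) + b ^ (2 ^ k))\<^sup>2" using Suc by simp
  also have "\<dots> = (a ^ (2 ^ k))\<^sup>2 + (b ^ (2 ^ k))\<^sup>2 + 2 * (a ^ (2 ^ k) * b ^ (2 ^ k))"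
    by (simp add: power2_eq_square algebra_simps)
  also have "\<dots> = a ^ (2 ^ Suc k) + b ^ (2 ^ Suc k)"
    using Suc.prems by (simp add: power_mult[symmetric] mult.commute)
  finally show ?case .
qed simp

lemma char_two_if_card_power_two:
  assumes "card (UNIV :: 'a::{field,finite} set) = 2 ^ m"
  shows "(2::'a) = 0"
proof -
  have "CHAR('a) dvd 2 ^ m" using CHAR_dvd_CARD assms by metis
  then obtain i where i: "i \<le> m" "CHAR('a) = 2 ^ i"
    using divides_primepow_nat[OF two_is_prime_nat] by blast
  have "i \<noteq> 0" using i CHAR_not_1' by (metis One_nat_def power_0)
  moreover have "(2::'a) ^ i = 0" using i(2) of_nat_CHAR[where ?'a = 'a] by simp
  ultimately show ?thesis by simp
qed

section \<open>The numerators N_j and the factorization N_j = D phi_j\<close>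

class field_gcd = field + factorial_ring_gcd + semiring_gcd_mult_normalize

instance alg_closure :: (field) field_gcd ..

definition numer :: "nat \<Rightarrow> 'b::comm_ring_1 poly poly poly" where
  "numer j = tvX ^ j + tvY ^ j + tvZ ^ j + (tvX + tvY + tvZ) ^ j"

lemma swap_numer: "swap_xy (numer j) = numer j" "swap_xz (numer j) = numer j"
  "swap_yz (numer j) = numer j"
  by (simp_all add: numer_def swap_hom_simps add_ac)

lemma linear_factors_explicit:
  "(tvX + tvY :: 'b::comm_ring_1 poly poly poly) = [:[:[:0,1:]:] + [:0,1:]:]"
  "(tvX + tvZ :: 'b::comm_ring_1 poly poly poly) = [:[:[:0,1:]:], 1:]"
  "(tvY + tvZ :: 'b::comm_ring_1 poly poly poly) = [:[:0,1:], 1:]"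
  by (simp_all add: tvX_def tvY_def tvZ_def)

text \<open>N_j vanishes at z = y (= -y in characteristic 2), so y + z divides it.\<close>
lemma yz_dvd_numer:
  assumes two: "(2::'b::comm_ring_1) = 0"
  shows "(tvY + tvZ :: 'b poly poly poly) dvd numer j"
proof -
  have two2: "(2::'b poly poly) = 0" using two by (intro char_two_poly)
  have e: "(tvY + tvZ :: 'b poly poly poly) = [:- [:0,1:], 1:]"
    using char_two_uminus[OF two2, of "[:0,1:]"] by (simp add: tvY_def tvZ_def)
  have "poly (numer j :: 'b poly poly poly) [:0,1:] = 0"
    using char_two_add_self[OF two2] two char_two_poly[OF two]
    by (simp add: numer_def tvX_def tvY_def tvZ_def add.assoc)
  then show ?thesis unfolding e by (simp add: poly_eq_0_iff_dvd)
qed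

lemma xz_dvd_numer:
  assumes two: "(2::'b::comm_ring_1) = 0"
  shows "(tvX + tvZ :: 'b poly poly poly) dvd numer j"
  using is_ring_hom_dvd[OF is_ring_hom_swap(1) yz_dvd_numer[OF two, of j]]
  by (simp add: swap_numer swap_hom_simps)

lemma xy_dvd_numer:
  assumes two: "(2::'b::comm_ring_1) = 0"
  shows "(tvX + tvY :: 'b poly poly poly) dvd numer j"
  using is_ring_hom_dvd[OF is_ring_hom_swap(2) yz_dvd_numer[OF two, of j]]
  by (simp add: swap_numer swap_hom_simps add_ac)

lemma coprime_const_monic_linear:
  fixes a b :: "'b::field_gcd poly poly"
  assumes "a \<noteq> 0"
  shows "coprime [:a:] [:b, 1:]"
proof (rule coprimeI)
  fix c assume c1: "c dvd [:a:]" and c2: "c dvd [:b, 1:]"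
  have "degree c = 0"
    using dvd_imp_degree_le[OF c1] assms by simp
  then obtain c0 where c0: "c = [:c0:]" by (metis degree_eq_zeroE)
  have "c0 dvd coeff [:b,1:] 1" using c2 unfolding c0 const_poly_dvd_iff by blast
  then show "is_unit c" unfolding c0 by (simp add: is_unit_const_poly_iff)
qed

lemma coprime_xy_xz: "coprime (tvX + tvY :: 'b::field_gcd poly poly poly) (tvX + tvZ)"
  unfolding linear_factors_explicit by (rule coprime_const_monic_linear) (simp add: pCons_eq_iff)

lemma coprime_xy_yz: "coprime (tvX + tvY :: 'b::field_gcd poly poly poly) (tvY + tvZ)"
  unfolding linear_factors_explicit by (rule coprime_const_monic_linear) (simp add: pCons_eq_iff)

lemma coprime_xz_yz: "coprime (tvX + tvZ :: 'b::field_gcd poly poly poly) (tvY + tvZ)"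
  using involution_coprime[OF is_ring_hom_swap(3) swap_yz_involution coprime_xy_yz]
  by (simp add: swap_hom_simps add_ac)

lemma denom3_nonzero: "(denom3 :: 'b::field_gcd poly poly poly) \<noteq> 0"
  unfolding denom3_def linear_factors_explicit by (simp add: pCons_eq_iff)

lemma numer_eq_denom3_phi_pow:
  assumes two: "(2::'b::field_gcd) = 0"
  shows "numer j = (denom3 :: 'b poly poly poly) * phi_pow j"
proof -
  have "(denom3 :: 'b poly poly poly) dvd numer j"
    unfolding denom3_def
    by (intro divides_mult xy_dvd_numer xz_dvd_numer yz_dvd_numer two)
      (use coprime_xy_xz coprime_xy_yz coprime_xz_yz in auto)
  then show ?thesis unfolding phi_pow_def numer_def[symmetric] by simp
qed

lemma phi_pow_below_three:
  assumes two: "(2::'b::field_gcd) = 0" and j: "j < 3"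
  shows "(phi_pow j :: 'b poly poly poly) = 0"
proof -
  have twoR: "(2::'b poly poly poly) = 0" using two by (intro char_two_poly)
  have "(numer j :: 'b poly poly poly) = 0"
  proof -
    have "(numer 2 :: 'b poly poly poly)
        = 2 * (tvX\<^sup>2 + tvY\<^sup>2 + tvZ\<^sup>2 + tvX*tvY + tvX*tvZ + tvY*tvZ)"
      by (simp add: numer_def power2_eq_square algebra_simps)
    moreover have "j = 0 \<or> j = 1 \<or> j = 2" using j by auto
    ultimately show ?thesis
      using twoR char_two_add_self[OF twoR, of "tvX + tvY + tvZ"]
      by (auto simp: numer_def add.assoc)
  qed
  then show ?thesis using numer_eq_denom3_phi_pow[OF two, of j] denom3_nonzero by auto
qed

lemma swap_yz_phi_pow:
  assumes two: "(2::'b::field_gcd) = 0"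
  shows "swap_yz (phi_pow j :: 'b poly poly poly) = phi_pow j"
proof -
  have "swap_yz (denom3 :: 'b poly poly poly) = denom3"
    by (simp add: denom3_def swap_hom_simps add_ac mult_ac)
  then have "denom3 * swap_yz (phi_pow j :: 'b poly poly poly) = denom3 * phi_pow j"
    using numer_eq_denom3_phi_pow[OF two, of j] swap_numer(3)[of j]
      is_ring_homD(4)[OF is_ring_hom_swap(3)] by metis
  then show ?thesis using denom3_nonzero by auto
qed

section \<open>Homogenization\<close>

text \<open>homog P = P(tx, ty, tz) as a polynomial in the new outer variable t; its coefficient
  of t^i is the homogeneous component of degree i of P.\<close>
definition homog :: "'b::comm_ring_1 poly poly poly \<Rightarrow> 'b poly poly poly poly" where
  "homog = subst3 (\<lambda>x. [:tvC x:]) (monom tvX 1) (monom tvY 1) (monom tvZ 1)"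

lemma is_ring_hom_homog: "is_ring_hom homog"
  unfolding homog_def
  by (intro is_ring_hom_subst3 is_ring_hom_comp[OF is_ring_hom_const is_ring_hom_tvC, unfolded o_def])

lemma homog_simps:
  "homog (tvC c) = [:tvC c:]" "homog tvX = monom tvX 1"
  "homog tvY = monom tvY 1" "homog tvZ = monom tvZ 1"
  unfolding homog_def
  by (simp_all add: subst3_simps[OF is_ring_hom_comp[OF is_ring_hom_const is_ring_hom_tvC, unfolded o_def]])

lemmas homog_hom_simps = is_ring_homD[OF is_ring_hom_homog] is_ring_hom_power[OF is_ring_hom_homog]
  homog_simps

lemma homog_at_one: "poly (homog P) 1 = P"
proof -
  have "((\<lambda>A. poly A 1) \<circ> homog) P = (\<lambda>x. x) P"
    by (rule ring_hom_trivariate_unique[OF is_ring_hom_comp[OF is_ring_hom_poly is_ring_hom_homog]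
          is_ring_hom_id]) (simp_all add: homog_simps poly_monom)
  then show ?thesis by simp
qed

lemma const_mult_monom: "[:c:] * monom a n = monom (c * a) n"
  by (metis monom_0 mult_monom add_0)

text \<open>twist A replaces t^i by (st)^i; it is used to compare homog (homog P) with homog P.\<close>
definition twist :: "'b::comm_ring_1 poly poly poly poly \<Rightarrow> 'b poly poly poly poly poly" where
  "twist A = poly (map_poly (\<lambda>c. [:[:c:]:]) A) (monom (monom 1 1) 1)"

lemma is_ring_hom_twist: "is_ring_hom twist"
proof -
  have "is_ring_hom ((\<lambda>B. poly B (monom (monom 1 1) 1)) \<circ> map_poly (\<lambda>c. [:[:c:]:]))"
    by (intro is_ring_hom_comp is_ring_hom_poly is_ring_hom_map_poly
        is_ring_hom_comp[OF is_ring_hom_const is_ring_hom_const, unfolded o_def])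
  then show ?thesis unfolding twist_def o_def by simp
qed

lemma coeff_twist: "coeff (twist A) i = monom (coeff A i) i"
proof (induction A arbitrary: i)
  case (pCons a A)
  have "twist (pCons a A) = [:[:a:]:] + monom (monom 1 1) 1 * twist A"
    by (simp add: twist_def map_poly_pCons)
  then show ?case
    by (cases i) (simp_all add: coeff_monom_mult pCons.IH mult_monom monom_0 coeff_pCons)
qed (simp add: twist_def)

lemma homog_component_homogeneous: "homog (coeff (homog P) i) = monom (coeff (homog P) i) i"
proof -
  have "(map_poly homog \<circ> homog) P = (twist \<circ> homog) P"
    by (rule ring_hom_trivariate_unique[OF
          is_ring_hom_comp[OF is_ring_hom_map_poly[OF is_ring_hom_homog] is_ring_hom_homog]
          is_ring_hom_comp[OF is_ring_hom_twist is_ring_hom_homog]])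
      (simp_all add: homog_simps twist_def map_poly_monom is_ring_homD[OF is_ring_hom_homog]
        map_poly_pCons mult_monom poly_monom const_mult_monom smult_monom)
  then have "coeff (map_poly homog (homog P)) i = coeff (twist (homog P)) i" by simp
  then show ?thesis by (simp add: coeff_map_poly is_ring_homD[OF is_ring_hom_homog] coeff_twist)
qed

lemma homogeneous_dvd_lower_degree:
  fixes L p :: "'b::comm_ring_1 poly poly poly"
  assumes "homog L = monom L s" "homog p = monom p r" "r < s" "L dvd p"
  shows "p = 0"
proof -
  obtain w where w: "p = L * w" using assms(4) by (auto simp: dvd_def)
  have "monom p r = monom L s * homog w"
    using assms(1,2) w is_ring_homD(4)[OF is_ring_hom_homog] by metis
  then have "coeff (monom p r) r = coeff (monom L s * homog w) r" by simp
  then show ?thesis using assms(3) by (simp add: coeff_monom_mult)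
qed

lemma homog_phi_pow:
  assumes two: "(2::'b::field_gcd) = 0"
  shows "homog (phi_pow j :: 'b poly poly poly) = monom (phi_pow j) (j - 3)"
proof -
  let ?D = "denom3 :: 'b poly poly poly"
  let ?p = "phi_pow j :: 'b poly poly poly"
  have "homog (numer j :: 'b poly poly poly) = monom (numer j) j"
    by (simp add: numer_def homog_hom_simps monom_power add_monom)
  moreover have "homog ?D = monom ?D 3"
    by (simp add: denom3_def homog_hom_simps add_monom mult_monom numeral_3_eq_3)
  ultimately have eq: "monom (?D * ?p) j = monom ?D 3 * homog ?p"
    using arg_cong[OF numer_eq_denom3_phi_pow[OF two, of j], of homog]
      numer_eq_denom3_phi_pow[OF two, of j] by (simp add: is_ring_homD[OF is_ring_hom_homog])
  show ?thesis
  proof (rule poly_eqI)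
    fix n
    have "?D * coeff (homog ?p) n = (if j = n + 3 then ?D * ?p else 0)"
      using arg_cong[OF eq, of "\<lambda>A. coeff A (n + 3)"] by (simp add: coeff_monom_mult)
    then have "coeff (homog ?p) n = (if j = n + 3 then ?p else 0)"
      using denom3_nonzero by (auto split: if_splits)
    then show "coeff (homog ?p) n = coeff (monom ?p (j - 3)) n"
      using phi_pow_below_three[OF two] by auto
  qed
qed

lemma poly_as_sum_upto:
  assumes "degree p \<le> n"
  shows "poly (p :: 'c::comm_semiring_1 poly) x = (\<Sum>i\<le>n. coeff p i * x ^ i)"
  unfolding poly_altdef
  by (rule sum.mono_neutral_left) (use assms in \<open>auto simp: coeff_eq_0\<close>)

lemma eval3_as_sum: "eval3 f T = (\<Sum>i\<le>degree f. tvC (coeff f i) * T ^ i)"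
proof -
  have "degree (map_poly tvC f) \<le> degree f" by (rule map_poly_degree_leq)
  then show ?thesis unfolding eval3_def
    by (subst poly_as_sum_upto[of _ "degree f"]) (auto simp: coeff_map_poly tvC_def)
qed

lemma phi_of_as_sum:
  assumes two: "(2::'b::field_gcd) = 0"
  shows "phi_of (f :: 'b poly) = (\<Sum>i\<le>degree f. tvC (coeff f i) * phi_pow i)"
proof -
  have "eval3 f tvX + eval3 f tvY + eval3 f tvZ + eval3 f (tvX + tvY + tvZ)
      = (\<Sum>i\<le>degree f. tvC (coeff f i) * numer i)"
    unfolding eval3_as_sum numer_def by (simp add: sum.distrib[symmetric] algebra_simps)
  also have "\<dots> = denom3 * (\<Sum>i\<le>degree f. tvC (coeff f i) * phi_pow i)"
    by (simp add: numer_eq_denom3_phi_pow[OF two] sum_distrib_left mult_ac)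
  finally show ?thesis
    unfolding phi_of_def using nonzero_mult_div_cancel_left[OF denom3_nonzero] by metis
qed

lemma coeff_homog_phi_of:
  assumes two: "(2::'b::field_gcd) = 0"
  shows "coeff (homog (phi_of (f :: 'b poly))) e = tvC (coeff f (e + 3)) * phi_pow (e + 3)"
proof -
  let ?t = "\<lambda>i. tvC (coeff f i) * (phi_pow i :: 'b poly poly poly)"
  have "homog (phi_of f) = (\<Sum>i\<le>degree f. monom (?t i) (i - 3))"
    unfolding phi_of_as_sum[OF two]
    by (simp add: is_ring_hom_sum[OF is_ring_hom_homog] homog_hom_simps homog_phi_pow[OF two]
        const_mult_monom smult_monom)
  then have "coeff (homog (phi_of f)) e = (\<Sum>i\<le>degree f. if i - 3 = e then ?t i else 0)"
    by (simp add: coeff_sum)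
  also have "\<dots> = (\<Sum>i\<le>degree f. if i = e + 3 then ?t i else 0)"
    by (rule sum.cong) (auto simp: phi_pow_below_three[OF two])
  also have "\<dots> = ?t (e + 3)"
    by (auto simp: coeff_eq_0 tvC_def)
  finally show ?thesis .
qed

section \<open>phi_d is squarefree for d = 2^k + 1\<close>

lemma of_nat_power_two_plus_one:
  assumes two: "(2::'c::comm_ring_1) = 0" and k: "k \<ge> 1"
  shows "(of_nat (2 ^ k + 1) :: 'c) = 1"
proof -
  obtain k' where "k = Suc k'" using k by (cases k) auto
  then have "(of_nat (2 ^ k) :: 'c) = 2 * of_nat (2 ^ k')" by simp
  then show ?thesis using two by simp
qed

lemma pderiv_numer:
  assumes two: "(2::'b::field) = 0" and k: "k \<ge> 1"
  shows "pderiv (numer (2 ^ k + 1) :: 'b poly poly poly) = (tvX + tvY) ^ (2 ^ k)"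
proof -
  have twoR: "(2::'b poly poly poly) = 0" using two by (intro char_two_poly)
  have two2: "(2::'b poly poly) = 0" using two by (intro char_two_poly)
  have d: "(of_nat (2 ^ k + 1) :: 'b poly poly) = 1"
    using of_nat_power_two_plus_one[OF two2 k] .
  have dvars: "pderiv (tvX :: 'b poly poly poly) = 0" "pderiv (tvY :: 'b poly poly poly) = 0"
    "pderiv (tvZ :: 'b poly poly poly) = 1"
    by (simp_all add: tvX_def tvY_def tvZ_def pderiv_pCons)
  have e: "2 ^ k + 1 = Suc (2 ^ k)" by simp
  have "pderiv (numer (2 ^ k + 1) :: 'b poly poly poly) = tvZ ^ (2^k) + (tvX + tvY + tvZ) ^ (2^k)"
    unfolding numer_def e using d k
    by (simp only: pderiv_add pderiv_power_Suc) (simp add: pderiv_add dvars add.commute zero_power)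
  also have "\<dots> = (tvX + tvY) ^ (2^k)"
    using char_two_power_add[OF twoR, of "tvX + tvY" tvZ k] char_two_add_self[OF twoR, of "tvZ ^ 2 ^ k"]
    by (simp add: algebra_simps)
  finally show ?thesis .
qed

lemma phi_pow_nonzero:
  assumes two: "(2::'b::field_gcd) = 0" and k: "k \<ge> 1"
  shows "(phi_pow (2 ^ k + 1) :: 'b poly poly poly) \<noteq> 0"
proof -
  have "(tvX + tvY :: 'b poly poly poly) \<noteq> 0"
    by (simp add: linear_factors_explicit pCons_eq_iff)
  then have "(numer (2 ^ k + 1) :: 'b poly poly poly) \<noteq> 0"
    using pderiv_numer[OF two k] by (metis pderiv_0 power_not_zero)
  then show ?thesis using numer_eq_denom3_phi_pow[OF two] by (metis mult_zero_right)
qed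

lemma square_dvd_imp_dvd_pderiv:
  assumes "h * h dvd A"
  shows "h dvd pderiv (A :: 'c::{comm_semiring_1,semiring_no_zero_divisors} poly)"
proof -
  obtain k where A: "A = h * h * k" using assms by (auto simp: dvd_def)
  have "pderiv A = h * (h * pderiv k + k * pderiv h + k * pderiv h)"
    unfolding A by (simp add: pderiv_mult algebra_simps)
  then show ?thesis by simp
qed

text \<open>A square factor h^2 of phi_d divides x+y; its image under y \<leftrightarrow> z is a square factor
  of (x+z) phi_d, hence also of N_d, so it divides both x+z and (x+y)^(2^k).\<close>
lemma phi_pow_squarefree:
  assumes two: "(2::'b::field_gcd) = 0" and k: "k \<ge> 1"
    and factors: "L * L' = (phi_pow (2 ^ k + 1) :: 'b poly poly poly)"
  shows "coprime L L'"
proof (rule ccontr)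
  let ?d = "2 ^ k + 1"
  let ?phi = "phi_pow ?d :: 'b poly poly poly"
  have sq_dvd: "h dvd (tvX + tvY) ^ (2 ^ k)" if "h * h dvd numer ?d" for h :: "'b poly poly poly"
    using square_dvd_imp_dvd_pderiv[OF that] pderiv_numer[OF two k] by metis
  assume "\<not> coprime L L'"
  then obtain c where c: "c dvd L" "c dvd L'" "\<not> is_unit c" by (rule not_coprimeE)
  have "L \<noteq> 0" using factors phi_pow_nonzero[OF two k] by auto
  then have "c \<noteq> 0" using c by auto
  then obtain h where h: "h dvd c" "prime h" using prime_divisor_exists c(3) by blast
  have hL: "h dvd L" "h dvd L'" using h c dvd_trans by blast+
  then have "h * h dvd ?phi" using mult_dvd_mono[OF hL] factors by simp
  then have "h * h dvd numer ?d"
    using numer_eq_denom3_phi_pow[OF two, of ?d] by (metis dvd_mult2 mult.commute)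
  then have "h dvd (tvX + tvY) ^ (2 ^ k)" by (rule sq_dvd)
  then have h_xy: "h dvd tvX + tvY" using prime_dvd_power h(2) by blast
  have h_phi: "h dvd ?phi" using hL(1) factors by (metis dvd_mult2)
  let ?t = "swap_yz h"
  have t_xz: "?t dvd tvX + tvZ"
    using is_ring_hom_dvd[OF is_ring_hom_swap(3) h_xy] by (simp add: swap_hom_simps)
  have t_phi: "?t dvd ?phi"
    using is_ring_hom_dvd[OF is_ring_hom_swap(3) h_phi] swap_yz_phi_pow[OF two] by simp
  have "(tvX + tvZ) * ?phi dvd numer ?d"
    using numer_eq_denom3_phi_pow[OF two, of ?d] unfolding denom3_def by (simp add: dvd_def mult_ac)
  then have "?t * ?t dvd numer ?d" using mult_dvd_mono[OF t_xz t_phi] dvd_trans by blast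
  then have t_xy: "?t dvd (tvX + tvY) ^ (2 ^ k)" by (rule sq_dvd)
  have "coprime (tvX + tvZ) ((tvX + tvY :: 'b poly poly poly) ^ (2 ^ k))"
    using coprime_xy_xz by (simp add: coprime_commute)
  then have "is_unit ?t" using t_xz t_xy coprime_common_divisor by blast
  then have "is_unit h" using is_ring_hom_unit[OF is_ring_hom_swap(3)] swap_yz_involution by metis
  then show False using h(2) not_prime_unit by blast
qed

section \<open>The gap argument\<close>

text \<open>By induction on i,
  coefficient n - i of Phi reduces to A_(s-i) B_u + A_s B_(u-i) = 0, so A_s divides A_(s-i),
  which has lower degree.\<close>
lemma components_below_top_vanish:
  fixes A B Phi :: "'b::field_gcd poly poly poly poly"
  assumes AB: "A * B = Phi"
    and dA: "degree A = s" and dB: "degree B = u" and su: "s \<le> u"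
    and gap: "\<And>e. n - G < e \<Longrightarrow> e < n \<Longrightarrow> coeff Phi e = 0" and n: "n = s + u" and sG: "s < G"
    and cop: "coprime (coeff A s) (coeff B u)"
    and homA: "\<And>i. homog (coeff A i) = monom (coeff A i) i"
    and homB: "\<And>i. homog (coeff B i) = monom (coeff B i) i"
  shows "1 \<le> i \<Longrightarrow> i \<le> s \<Longrightarrow> coeff A (s - i) = 0 \<and> coeff B (u - i) = 0"
proof (induction i rule: less_induct)
  case (less i)
  define f where "f a = coeff A a * coeff B (n - i - a)" for a
  have f_zero: "f a = 0" if "a \<le> n - i" "a \<noteq> s - i" "a \<noteq> s" for a
  proof (cases "s < a")
    case True then show ?thesis by (simp add: f_def coeff_eq_0 dA)
  next
    case False
    show ?thesis
    proof (cases "a < s - i")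
      case True
      then have "u < n - i - a" using less.prems n by linarith
      then show ?thesis by (simp add: f_def coeff_eq_0 dB)
    next
      case False
      define i' where "i' = s - a"
      have "1 \<le> i'" "i' < i" "a = s - i'"
        using False \<open>\<not> s < a\<close> that less.prems unfolding i'_def by auto
      then have "coeff A a = 0" using less.IH[of i'] less.prems by auto
      then show ?thesis by (simp add: f_def)
    qed
  qed
  have "coeff Phi (n - i) = (\<Sum>a\<le>n - i. f a)"
    unfolding AB[symmetric] coeff_mult f_def by simp
  also have "\<dots> = (\<Sum>a\<in>{s - i, s}. f a)"
    by (rule sum.mono_neutral_right) (use f_zero less.prems n su in auto)
  also have "\<dots> = f (s - i) + f s" using less.prems by simp
  also have "\<dots> = coeff A (s - i) * coeff B u + coeff A s * coeff B (u - i)"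
    unfolding f_def using less.prems n su by (simp add: algebra_simps)
  finally have "coeff Phi (n - i) = coeff A (s - i) * coeff B u + coeff A s * coeff B (u - i)" .
  moreover have "coeff Phi (n - i) = 0"
    by (rule gap) (use less.prems sG n su in linarith)+
  ultimately have eq: "coeff A (s - i) * coeff B u = - (coeff A s * coeff B (u - i))"
    by (simp add: eq_neg_iff_add_eq_0)
  have "coeff A s dvd coeff A (s - i) * coeff B u" unfolding eq by simp
  then have dA_low: "coeff A s dvd coeff A (s - i)" using cop coprime_dvd_mult_left_iff by blast
  have "coeff B u dvd coeff A s * coeff B (u - i)"
    using eq by (metis dvd_minus_iff dvd_triv_right)
  then have dB_low: "coeff B u dvd coeff B (u - i)"
    using cop coprime_dvd_mult_right_iff coprime_commute by blast
  have "coeff A (s - i) = 0"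
    by (rule homogeneous_dvd_lower_degree[OF homA homA _ dA_low]) (use less.prems in auto)
  moreover have "coeff B (u - i) = 0"
    by (rule homogeneous_dvd_lower_degree[OF homB homB _ dB_low]) (use less.prems su in auto)
  ultimately show ?case by simp
qed

lemma smaller_factor_homogeneous:
  fixes P Q phi phid :: "'b::field_gcd poly poly poly"
  assumes PQ: "P * Q = phi" and deg: "degree (homog P) \<le> degree (homog Q)"
    and dphi: "degree (homog phi) = n" and top: "coeff (homog phi) n = phid" and nz: "phid \<noteq> 0"
    and sqf: "\<And>L L'. L * L' = phid \<Longrightarrow> coprime L L'"
    and gap: "\<And>e. n - G < e \<Longrightarrow> e < n \<Longrightarrow> coeff (homog phi) e = 0" and nG: "n < 2 * G"
  shows "homog P = monom P (degree (homog P))"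
proof -
  define A where "A = homog P"
  define B where "B = homog Q"
  define s where "s = degree A"
  define u where "u = degree B"
  have AB: "A * B = homog phi"
    unfolding A_def B_def using PQ is_ring_homD(4)[OF is_ring_hom_homog] by metis
  have "homog phi \<noteq> 0" using top nz by auto
  then have "A \<noteq> 0" "B \<noteq> 0" using AB by auto
  then have n: "n = s + u" using degree_mult_eq AB dphi s_def u_def by metis
  have su: "s \<le> u" using deg A_def B_def s_def u_def by simp
  have "coeff A s * coeff B u = phid"
    using lead_coeff_mult[of A B] AB dphi top s_def u_def by simp
  then have cop: "coprime (coeff A s) (coeff B u)" by (rule sqf)
  have sG: "s < G" using n su nG by linarith
  have low: "coeff A (s - i) = 0" if "1 \<le> i" "i \<le> s" for i
    using components_below_top_vanish[OF AB s_def[symmetric] u_def[symmetric] su gap n sG cop]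
      homog_component_homogeneous[of P] homog_component_homogeneous[of Q] that
    unfolding A_def B_def by blast
  have A_monom: "A = monom (coeff A s) s"
  proof (rule poly_eqI)
    fix m
    show "coeff A m = coeff (monom (coeff A s) s) m"
    proof (cases m s rule: linorder_cases)
      case less
      then show ?thesis using low[of "s - m"] by simp
    qed (auto simp: coeff_eq_0 s_def)
  qed
  then have "P = coeff A s"
    using homog_at_one[of P] unfolding A_def by (metis poly_monom power_one mult_1_right)
  then show ?thesis using A_monom unfolding A_def s_def by simp
qed

lemma irreducible_by_component_gap:
  fixes phi phid psi c :: "'b::field_gcd poly poly poly"
  assumes top: "coeff (homog phi) n = phid" and nz: "phid \<noteq> 0" and n0: "0 < n"
    and above: "\<And>e. n < e \<Longrightarrow> coeff (homog phi) e = 0"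
    and sqf: "\<And>L L'. L * L' = phid \<Longrightarrow> coprime L L'"
    and gap: "\<And>e. n - G < e \<Longrightarrow> e < n \<Longrightarrow> coeff (homog phi) e = 0" and nG: "n < 2 * G"
    and e0: "coeff (homog phi) e0 = c * psi" and cu: "is_unit c" and cop: "coprime psi phid"
  shows "irreducible phi"
proof -
  have dphi: "degree (homog phi) = n"
    by (rule antisym[OF degree_le le_degree]) (use above top nz in auto)
  have unit: "is_unit P" if PQ: "P * Q = phi" and deg: "degree (homog P) \<le> degree (homog Q)" for P Q
  proof -
    have "homog phi = monom P (degree (homog P)) * homog Q"
      using smaller_factor_homogeneous[OF PQ deg dphi top nz sqf gap nG]
        is_ring_homD(4)[OF is_ring_hom_homog] PQ by metis
    then have P_dvd: "P dvd coeff (homog phi) e" for e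
      by (simp add: coeff_monom_mult)
    then have "P dvd psi" using P_dvd[of e0] e0 cu by (simp add: dvd_mult_unit_iff')
    moreover have "P dvd phid" using P_dvd[of n] top by simp
    ultimately show ?thesis using cop coprime_common_divisor by blast
  qed
  show ?thesis
  proof (rule irreducibleI)
    show "phi \<noteq> 0" using top nz is_ring_homD(1)[OF is_ring_hom_homog] by (metis coeff_0)
    show "\<not> is_unit phi"
      using is_ring_hom_unit[OF is_ring_hom_homog, of phi] dphi n0 by (auto simp: is_unit_poly_iff)
    show "is_unit a \<or> is_unit b" if "phi = a * b" for a b
      using unit[of a b] unit[of b a] that by (metis mult.commute nat_le_linear)
  qed
qed

lemma components_phi_of_sparse:
  fixes g :: "'b::field_gcd poly"
  assumes two: "(2::'b) = 0" and k: "k \<ge> 2" and deg_g: "degree g \<le> 2 ^ (k - 1) + 1"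
  defines "Phi \<equiv> homog (phi_of (monom 1 (2 ^ k + 1) + g))"
  shows "coeff Phi (2 ^ k - 2) = phi_pow (2 ^ k + 1)"
    and "\<And>e. 2 ^ k - 2 < e \<Longrightarrow> coeff Phi e = 0"
    and "\<And>e. 2 ^ k - 2 - 2 ^ (k - 1) < e \<Longrightarrow> e < 2 ^ k - 2 \<Longrightarrow> coeff Phi e = 0"
    and "\<And>j. 3 \<le> j \<Longrightarrow> j \<le> degree g \<Longrightarrow> coeff Phi (j - 3) = tvC (coeff g j) * phi_pow j"
proof -
  define K :: nat where "K = 2 ^ (k - 1)"
  obtain k' where k': "k = k' + 2" using k by (metis add.commute le_Suc_ex)
  have K2: "K \<ge> 2" and pk: "2 ^ k = 2 * K" and Kk: "2 ^ (k - Suc 0) = K"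
    unfolding K_def k' by simp_all
  have g0: "coeff g i = 0" if "K + 1 < i" for i
    using deg_g that unfolding K_def by (simp add: coeff_eq_0)
  have tvC0: "tvC 0 = (0 :: 'b poly poly poly)" and tvC1: "tvC 1 = (1 :: 'b poly poly poly)"
    by (simp_all add: tvC_def one_pCons)
  have comp: "coeff Phi e
      = tvC ((if e + 3 = 2 * K + 1 then 1 else 0) + coeff g (e + 3)) * phi_pow (e + 3)" for e
    unfolding Phi_def coeff_homog_phi_of[OF two] by (simp add: pk)
  show "coeff Phi (2 ^ k - 2) = phi_pow (2 ^ k + 1)"
    using comp[of "2 * K - 2"] g0[of "2 * K + 1"] K2 by (simp add: pk tvC1)
  show "coeff Phi e = 0" if "2 ^ k - 2 < e" for e
    using comp[of e] g0[of "e + 3"] that K2 by (simp add: pk tvC0)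
  show "coeff Phi e = 0" if "2 ^ k - 2 - 2 ^ (k - 1) < e" "e < 2 ^ k - 2" for e
    using comp[of e] g0[of "e + 3"] that K2 by (simp add: pk Kk tvC0)
  show "coeff Phi (j - 3) = tvC (coeff g j) * phi_pow j" if "3 \<le> j" "j \<le> degree g" for j
    using comp[of "j - 3"] that deg_g K2 by (simp add: Kk)
qed

theorem mainTheorem8:
  fixes g :: "'a::{field,finite} poly" and k m :: nat
  assumes q: "card (UNIV :: 'a set) = 2 ^ m"
    and k: "k \<ge> 2"
    and deg_g: "degree g \<le> 2 ^ (k - 1) + 1"
    and hyp: "\<exists>j. coeff g j \<noteq> 0
               \<and> (phi_pow j :: 'a alg_closure poly poly poly) \<noteq> 0
               \<and> coprime (phi_pow j :: 'a alg_closure poly poly poly) (phi_pow (2 ^ k + 1))"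
  shows "irreducible (phi_of (map_poly to_ac (monom 1 (2 ^ k + 1) + g)))"
proof -
  have two: "(2::'a alg_closure) = 0"
    using arg_cong[OF char_two_if_card_power_two[OF q], of to_ac] by simp
  let ?g = "map_poly to_ac g"
  have f: "map_poly to_ac (monom 1 (2 ^ k + 1) + g) = monom 1 (2 ^ k + 1) + ?g"
    by (rule poly_eqI) (simp add: coeff_map_poly)
  have deg: "degree ?g \<le> 2 ^ (k - 1) + 1" using map_poly_degree_leq deg_g le_trans by blast
  obtain j where j: "coeff g j \<noteq> 0" "(phi_pow j :: 'a alg_closure poly poly poly) \<noteq> 0"
    "coprime (phi_pow j :: 'a alg_closure poly poly poly) (phi_pow (2 ^ k + 1))"
    using hyp by blast
  have j3: "3 \<le> j" using j(2) phi_pow_below_three[OF two] by (meson not_le)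
  have j_deg: "j \<le> degree ?g" using j(1) by (intro le_degree) (simp add: coeff_map_poly)
  have unit: "is_unit (tvC (to_ac (coeff g j)) :: 'a alg_closure poly poly poly)"
    using j(1) by (simp add: tvC_def is_unit_const_poly_iff dvd_field_iff)
  have k1: "k \<ge> 1" using k by simp
  have "4 \<le> (2::nat) ^ k" using power_increasing[OF k, of "2::nat"] by simp
  moreover have "(2::nat) ^ k = 2 * 2 ^ (k - 1)" using k1 by (metis power_Suc Suc_diff_1 not_one_le_zero not_gr0)
  ultimately have n: "0 < (2::nat) ^ k - 2" "(2::nat) ^ k - 2 < 2 * 2 ^ (k - 1)" by linarith+
  note shape = components_phi_of_sparse[OF two k deg]
  show ?thesis unfolding f
    using irreducible_by_component_gap[OF shape(1) phi_pow_nonzero[OF two k1] n(1) shape(2)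
        phi_pow_squarefree[OF two k1] shape(3) n(2) shape(4)[OF j3 j_deg] _ j(3)] unit
    by (simp add: coeff_map_poly)
qed

end
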